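(* Let $C\in\mathbb{R}^{n\times n}$ be symmetric, $\rho>0$, and let $(\tilde\sigma^k,\sigma^k,y^k)$ be generated by the ADMM-BM algorithm described in the context, with Assumption A holding. Then for all $k\ge2$, $L_\rho(\tilde\sigma^k,\sigma^k,y^k)\ge -n\|C\|_\infty$.
   Context: $\langle A,B\rangle=\mathrm{Tr}(A^\top B)$, $\|\cdot\|_F$ Frobenius norm, $\|C\|_\infty=\max_i\sum_j|C_{ij}|$. For $\sigma\in\mathbb{R}^{n\times r}$, $\sigma_i$ is its $i$-th row; $\mathcal{M}=\{\sigma\in\mathbb{R}^{n\times r}:\|\sigma_i\|=1\ \forall i\}$. ADMM-BM with parameter $\rho$: choose $\tilde\sigma^0\in\mathcal{M}$, $\sigma^0=\tilde\sigma^0$, $y^0=C\tilde\sigma^0$. For $k=0,1,\dots$: $\gamma^k=\sigma^k-\frac1\rho(y^k+C\sigma^k)$ with rows $\gamma_i^k$; $\tilde\sigma^{k+1}_i=\gamma_i^k/\|\gamma_i^k\|$; $\sigma^{k+1}=\tilde\sigma^{k+1}+\frac1\rho(y^k-C\tilde\sigma^{k+1})$; $y^{k+1}=y^k+\rho(\tilde\sigma^{k+1}-\sigma^{k+1})$. Assumption A: $\gamma_i^k\neq0$ for all $i,k$. $L_\rho(\tilde\sigma,\sigma,y)=\langle C,\tilde\sigma\sigma^\top\rangle+\langle y,\tilde\sigma-\sigma\rangle+\frac\rho2\|\tilde\sigma-\sigma\|_F^2+\sum_i\mathcal{I}_{\{\|u\|=1\}}(\tilde\sigma_i)$, $\mathcal{I}_S$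 the indicator function of $S$. *)

theory Defs
  imports "HOL-Analysis.Analysis"
begin

text \<open>Matrices in R^{n x r} are represented as real^'r^'n (row i is s $ i).\<close>

definition frob_inner :: "real^'c^'m \<Rightarrow> real^'c^'m \<Rightarrow> real" where
  "frob_inner A B = (\<Sum>i\<in>UNIV. \<Sum>j\<in>UNIV. A $ i $ j * B $ i $ j)"

definition frob_norm :: "real^'c^'m \<Rightarrow> real" where
  "frob_norm A = sqrt (frob_inner A A)"

definition inf_norm :: "real^'n^'m \<Rightarrow> real" where
  "inf_norm C = Max (range (\<lambda>i. \<Sum>j\<in>UNIV. \<bar>C $ i $ j\<bar>))"

definition sphere_rows :: "(real^'r^'n) set" where
  "sphere_rows = {s. \<forall>i. norm (s $ i) = 1}"

definition L_rho :: "real \<Rightarrow> real^'n^'n \<Rightarrow> real^'r^'n \<Rightarrow> real^'r^'n \<Rightarrow> real^'r^'n \<Rightarrow> ereal" where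
  "L_rho \<rho> C st s y =
     (if st \<in> sphere_rows then
        ereal (frob_inner C (st ** transpose s) + frob_inner y (st - s)
               + \<rho> / 2 * (frob_norm (st - s))\<^sup>2)
      else \<infinity>)"

end

theory Submission
  imports Defs
begin

text \<open>The multiplier update forces \<open>y\<^sup>k = C \<sigma>\<^sup>k\<close> (writing \<open>\<sigma>\<close> for the
  normalised iterate), already at \<open>k = 0\<close> by the choice of \<open>y\<^sup>0\<close>.
  With this multiplier the bilinear and multiplier terms of \<open>L\<^sub>\<rho>\<close> collapse, by symmetry
  of \<open>C\<close>, to the quadratic form \<open>\<langle>C \<sigma>, \<sigma>\<rangle> = \<Sum>\<^sub>i\<^sub>j C\<^sub>i\<^sub>j \<langle>\<sigma>\<^sub>i, \<sigma>\<^sub>j\<rangle>\<close>. The rows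
  of \<open>\<sigma>\<close> are unit vectors, so by Cauchy-Schwarz this is at least
  \<open>-\<Sum>\<^sub>i\<^sub>j |C\<^sub>i\<^sub>j| \<ge> -n \<parallel>C\<parallel>\<^sub>\<infinity>\<close>, and the penalty term is nonnegative.\<close>

lemma frob_inner_eq_inner: "frob_inner A B = inner A B"
  by (simp add: frob_inner_def inner_vec_def)

lemma inner_matrix_mult_transpose:
  fixes C :: "real^'m^'n" and A :: "real^'c^'n" and B :: "real^'c^'m"
  shows "inner C (A ** transpose B) = inner (transpose C ** A) B"
proof -
  have "inner C (A ** transpose B) = (\<Sum>i\<in>UNIV. \<Sum>j\<in>UNIV. \<Sum>l\<in>UNIV. C $ i $ j * A $ i $ l * B $ j $ l)"
    by (simp add: inner_vec_def matrix_matrix_mult_def transpose_def sum_distrib_left mult.assoc)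
  also have "\<dots> = (\<Sum>j\<in>UNIV. \<Sum>l\<in>UNIV. \<Sum>i\<in>UNIV. C $ i $ j * A $ i $ l * B $ j $ l)"
    by (subst sum.swap) (rule sum.cong[OF refl], rule sum.swap)
  also have "\<dots> = inner (transpose C ** A) B"
    by (simp add: inner_vec_def matrix_matrix_mult_def transpose_def sum_distrib_right)
  finally show ?thesis .
qed

lemma inner_matrix_mult_self:
  fixes C :: "real^'n^'n" and S :: "real^'r^'n"
  shows "inner (C ** S) S = (\<Sum>i\<in>UNIV. \<Sum>j\<in>UNIV. C $ i $ j * inner (S $ i) (S $ j))"
proof -
  have "inner (C ** S) S = (\<Sum>i\<in>UNIV. \<Sum>l\<in>UNIV. \<Sum>j\<in>UNIV. C $ i $ j * (S $ i $ l * S $ j $ l))"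
    by (simp add: inner_vec_def matrix_matrix_mult_def sum_distrib_left ac_simps)
  also have "\<dots> = (\<Sum>i\<in>UNIV. \<Sum>j\<in>UNIV. C $ i $ j * inner (S $ i) (S $ j))"
    by (rule sum.cong[OF refl], subst sum.swap) (simp add: inner_vec_def sum_distrib_left)
  finally show ?thesis .
qed

lemma abs_quadratic_form_le:
  fixes C :: "real^'n^'n" and S :: "real^'r^'n"
  assumes "\<And>i. norm (S $ i) \<le> 1"
  shows "\<bar>\<Sum>i\<in>UNIV. \<Sum>j\<in>UNIV. C $ i $ j * inner (S $ i) (S $ j)\<bar>
         \<le> (\<Sum>i\<in>UNIV. \<Sum>j\<in>UNIV. \<bar>C $ i $ j\<bar>)"
proof -
  have entry_le: "\<bar>C $ i $ j * inner (S $ i) (S $ j)\<bar> \<le> \<bar>C $ i $ j\<bar>" for i j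
  proof -
    have "\<bar>inner (S $ i) (S $ j)\<bar> \<le> norm (S $ i) * norm (S $ j)"
      by (rule Cauchy_Schwarz_ineq2)
    also have "\<dots> \<le> 1"
      using assms by (simp add: mult_le_one)
    finally show ?thesis
      by (simp add: abs_mult mult_left_le)
  qed
  have "\<bar>\<Sum>i\<in>UNIV. \<Sum>j\<in>UNIV. C $ i $ j * inner (S $ i) (S $ j)\<bar>
        \<le> (\<Sum>i\<in>UNIV. \<Sum>j\<in>UNIV. \<bar>C $ i $ j * inner (S $ i) (S $ j)\<bar>)"
    by (rule order_trans[OF sum_abs sum_mono[OF sum_abs]])
  also have "\<dots> \<le> (\<Sum>i\<in>UNIV. \<Sum>j\<in>UNIV. \<bar>C $ i $ j\<bar>)"
    by (intro sum_mono entry_le)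
  finally show ?thesis .
qed

lemma sum_abs_entries_le_inf_norm:
  fixes C :: "real^'n^'m"
  shows "(\<Sum>i\<in>UNIV. \<Sum>j\<in>UNIV. \<bar>C $ i $ j\<bar>) \<le> real CARD('m) * inf_norm C"
proof -
  have "(\<Sum>j\<in>UNIV. \<bar>C $ i $ j\<bar>) \<le> inf_norm C" for i
    unfolding inf_norm_def by (rule Max_ge) auto
  then have "(\<Sum>i\<in>UNIV. \<Sum>j\<in>UNIV. \<bar>C $ i $ j\<bar>) \<le> (\<Sum>i\<in>(UNIV :: 'm set). inf_norm C)"
    by (rule sum_mono)
  then show ?thesis
    by simp
qed

lemma coupling_terms_eq_quadratic_form:
  fixes C :: "real^'n^'n" and S T :: "real^'r^'n"
  assumes "transpose C = C"
  shows "frob_inner C (S ** transpose T) + frob_inner (C ** S) (S - T) = inner (C ** S) S"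
  using assms by (simp add: frob_inner_eq_inner inner_matrix_mult_transpose inner_diff_right)

lemma L_rho_at_dual_ge:
  fixes C :: "real^'n^'n" and S T :: "real^'r^'n"
  assumes "transpose C = C" and "\<rho> \<ge> 0" and "S \<in> sphere_rows"
  shows "L_rho \<rho> C S T (C ** S) \<ge> ereal (- real CARD('n) * inf_norm C)"
proof -
  have unit_rows: "norm (S $ i) \<le> 1" for i
    using assms(3) by (simp add: sphere_rows_def)
  have "- real CARD('n) * inf_norm C \<le> inner (C ** S) S"
    using abs_quadratic_form_le[OF unit_rows, of C] sum_abs_entries_le_inf_norm[of C]
    by (simp add: inner_matrix_mult_self)
  moreover have "0 \<le> \<rho> / 2 * (frob_norm (S - T))\<^sup>2"
    using assms(2) by simp
  ultimately show ?thesis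
    using assms(3) coupling_terms_eq_quadratic_form[OF assms(1), of S T]
    by (simp add: L_rho_def)
qed

lemma admm_dual_eq:
  fixes C :: "real^'n^'n" and st s y :: "nat \<Rightarrow> real^'r^'n"
  assumes "\<rho> \<noteq> 0"
    and "y 0 = C ** st 0"
    and "\<And>k. s (Suc k) = st (Suc k) + (1/\<rho>) *\<^sub>R (y k - C ** st (Suc k))"
    and "\<And>k. y (Suc k) = y k + \<rho> *\<^sub>R (st (Suc k) - s (Suc k))"
  shows "y k = C ** st k"
proof (cases k)
  case 0
  then show ?thesis using assms(2) by simp
next
  case (Suc m)
  have "y (Suc m) = y m - \<rho> *\<^sub>R ((1/\<rho>) *\<^sub>R (y m - C ** st (Suc m)))"
    by (simp add: assms(3,4))
  then show ?thesis
    using Suc assms(1) by simp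
qed

lemma admm_primal_in_sphere_rows:
  fixes st \<gamma> :: "nat \<Rightarrow> real^'r^'n"
  assumes "st 0 \<in> sphere_rows"
    and "\<And>k i. st (Suc k) $ i = (1 / norm (\<gamma> k $ i)) *\<^sub>R (\<gamma> k $ i)"
    and "\<And>k i. \<gamma> k $ i \<noteq> 0"
  shows "st k \<in> sphere_rows"
  using assms by (cases k) (simp_all add: sphere_rows_def)

theorem lemma4:
  fixes C :: "real^'n^'n" and \<rho> :: real
    and st s y :: "nat \<Rightarrow> real^'r^'n"
    and \<gamma> :: "nat \<Rightarrow> real^'r^'n"
  assumes symC: "transpose C = C"
    and rho_pos: "\<rho> > 0"
    and init_M: "st 0 \<in> sphere_rows"
    and init_s: "s 0 = st 0"
    and init_y: "y 0 = C ** st 0"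
    and gamma_def: "\<And>k. \<gamma> k = s k - (1/\<rho>) *\<^sub>R (y k + C ** s k)"
    and st_step: "\<And>k i. st (Suc k) $ i = (1 / norm (\<gamma> k $ i)) *\<^sub>R (\<gamma> k $ i)"
    and s_step: "\<And>k. s (Suc k) = st (Suc k) + (1/\<rho>) *\<^sub>R (y k - C ** st (Suc k))"
    and y_step: "\<And>k. y (Suc k) = y k + \<rho> *\<^sub>R (st (Suc k) - s (Suc k))"
    and assumpA: "\<And>k i. \<gamma> k $ i \<noteq> 0"
    and k2: "k \<ge> 2"
  shows "L_rho \<rho> C (st k) (s k) (y k) \<ge> ereal (- real CARD('n) * inf_norm C)"
proof -
  have dual: "y k = C ** st k"
    using rho_pos by (intro admm_dual_eq[OF _ init_y s_step y_step]) simp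
  have primal: "st k \<in> sphere_rows"
    using init_M st_step assumpA by (rule admm_primal_in_sphere_rows)
  show ?thesis
    unfolding dual using rho_pos by (intro L_rho_at_dual_ge[OF symC _ primal]) simp
qed

end
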